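(* Let $n\ge 5$ be an integer with $n\equiv 1\pmod 4$, let $\Delta_n(u,v)=(n-1)^{n-1}u^n+n^nv^{n-1}$, and let $\ell$ be an odd prime. Define $$ S_n(\ell)=\sum_{u=1}^{\ell}\sum_{v=1}^{\ell}\left(\frac{\Delta_n(u,v)}{\ell}\right). $$ Then $|S_n(\ell)|\le c\,\ell$ for some constant $c>0$ depending only on $n$.
   Context: $\left(\frac{w}{\ell}\right)$ denotes the Legendre (Jacobi) symbol of $w$ modulo $\ell$. The polynomial $\Delta_n(u,v)$ is the discriminant of $t^n+ut+v$ when $n\equiv1\pmod4$. *)

theory Defs
  imports "HOL-Number_Theory.Number_Theory"
begin

text \<open>Discriminant of t^n + u t + v (for n = 1 mod 4), as an integer polynomial in u, v.\<close>
definition Delta :: "nat \<Rightarrow> int \<Rightarrow> int \<Rightarrow> int" where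
  "Delta n u v = (int n - 1) ^ (n - 1) * u ^ n + (int n) ^ n * v ^ (n - 1)"

definition S :: "nat \<Rightarrow> int \<Rightarrow> int" where
  "S n l = (\<Sum>u = 1..l. \<Sum>v = 1..l. Legendre (Delta n u v) l)"

end

theory Submission
  imports Defs
begin

text \<open>For every prime \<open>p > n\<close> the sum vanishes exactly, and for the finitely many other primes
  the trivial bound \<open>\<bar>S\<bar> \<le> \<ell>\<^sup>2 \<le> n \<ell>\<close> suffices; of \<open>n \<equiv> 1 (mod 4)\<close> only the oddness of \<open>n\<close> is used.
  Write \<open>\<chi>\<close> for the Legendre symbol, \<open>n = 2m + 1\<close> and \<open>\<Delta>(u, v) = A u\<^sup>n + B v\<^sup>2\<^sup>m\<close> with \<open>p \<nmid> A\<close>.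
  The row \<open>v = 0\<close> is \<open>\<chi>(A) \<Sum>\<^sub>u \<chi>(u) = 0\<close>. For \<open>v \<noteq> 0\<close> the substitution \<open>u \<mapsto> v u\<close> and
  \<open>\<Delta>(v u, v) = (v\<^sup>m)\<^sup>2 (A v u\<^sup>n + B)\<close> turn the row into \<open>\<Sum>\<^sub>u \<chi>(A u\<^sup>n v + B)\<close>. Summed over all
  \<open>v\<close>, including \<open>v = 0\<close>, these rows give \<open>p \<chi>(B)\<close>: each column \<open>u \<noteq> 0\<close> is a complete sum of \<open>\<chi>\<close>
  over an affine image of the residues, hence \<open>0\<close>, and the column \<open>u = 0\<close> is \<open>p \<chi>(B)\<close>. Since the
  added row \<open>v = 0\<close> is \<open>p \<chi>(B)\<close> as well, the total is \<open>0\<close>.\<close>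

lemma Legendre_cong:
  assumes "[a = b] (mod p)"
  shows "Legendre a p = Legendre b p"
proof -
  have "[a = 0] (mod p) \<longleftrightarrow> [b = 0] (mod p)" "QuadRes p a \<longleftrightarrow> QuadRes p b"
    using assms cong_sym cong_trans unfolding QuadRes_def by blast+
  then show ?thesis
    unfolding Legendre_def by simp
qed

lemma Legendre_mod: "Legendre (a mod p) p = Legendre a p"
  by (rule Legendre_cong) (simp add: cong_def)

lemma Legendre_cases: "Legendre a p \<in> {-1, 0, 1}"
  unfolding Legendre_def by auto

lemma abs_Legendre_le_1: "\<bar>Legendre a p\<bar> \<le> 1"
  unfolding Legendre_def by auto

lemma Legendre_eq_0_iff: "Legendre a p = 0 \<longleftrightarrow> p dvd a"
  unfolding Legendre_def by (auto simp: cong_0_iff)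

lemma Legendre_1: "p > 1 \<Longrightarrow> Legendre 1 p = 1"
  unfolding Legendre_def QuadRes_def
  by (auto simp: cong_0_iff zdvd_not_zless intro: exI[of _ 1])

lemma Legendre_mult:
  fixes p :: int
  assumes "prime p" "p > 2"
  shows "Legendre (a * b) p = Legendre a p * Legendre b p"
proof -
  let ?k = "(nat p - 1) div 2" and ?d = "Legendre (a * b) p - Legendre a p * Legendre b p"
  have euler: "[Legendre x p = x ^ ?k] (mod p)" for x
    using euler_criterion[of "nat p" x] assms by simp
  have "[Legendre (a * b) p = Legendre a p * Legendre b p] (mod p)"
    using euler[of "a * b"] cong_mult[OF euler[of a] euler[of b]]
    by (simp add: power_mult_distrib) (meson cong_sym cong_trans)
  then have "p dvd ?d"
    by (simp add: cong_iff_dvd_diff)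
  moreover have "\<bar>?d\<bar> < p"
    using Legendre_cases[of "a * b" p] Legendre_cases[of a p] Legendre_cases[of b p] assms(2)
    by auto
  ultimately have "?d = 0"
    using dvd_imp_le_int[of ?d p] assms(2) by linarith
  then show ?thesis
    by simp
qed

lemma Legendre_power:
  fixes p :: int
  assumes "prime p" "p > 2"
  shows "Legendre (a ^ k) p = Legendre a p ^ k"
  by (induction k) (use assms in \<open>simp_all add: Legendre_1 Legendre_mult\<close>)

lemma Legendre_power_odd:
  fixes p :: int
  assumes "prime p" "p > 2"
  shows "Legendre (a ^ (2 * m + 1)) p = Legendre a p"
  unfolding Legendre_power[OF assms] using Legendre_cases[of a p] by (auto simp: power_mult)

lemma Legendre_square_mult:
  fixes p :: int
  assumes "prime p" "p > 2" "\<not> p dvd a"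
  shows "Legendre (a\<^sup>2 * b) p = Legendre b p"
proof -
  have "Legendre a p \<in> {-1, 1}"
    using Legendre_cases[of a p] Legendre_eq_0_iff[of a p] assms(3) by auto
  then show ?thesis
    by (auto simp: Legendre_mult[OF assms(1,2)] Legendre_power[OF assms(1,2)])
qed

lemma sum_mod_affine_reindex:
  fixes p c d :: int and f :: "int \<Rightarrow> 'a::comm_monoid_add"
  assumes "prime p" "\<not> p dvd c" and periodic: "\<And>x. f (x mod p) = f x"
  shows "(\<Sum>x\<in>{0..<p}. f (c * x + d)) = (\<Sum>x\<in>{0..<p}. f x)"
proof -
  define h where "h x = (c * x + d) mod p" for x
  have "inj_on h {0..<p}"
  proof (rule inj_onI)
    fix x y
    assume "x \<in> {0..<p}" "y \<in> {0..<p}" "h x = h y"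
    moreover from \<open>h x = h y\<close> have "[c * x = c * y] (mod p)"
      unfolding h_def cong_def[symmetric] using cong_add_rcancel by blast
    then have "[x = y] (mod p)"
      using cong_mult_lcancel assms(1,2) prime_imp_coprime coprime_commute by blast
    ultimately show "x = y"
      using cong_less_imp_eq_int by auto
  qed
  moreover have "h ` {0..<p} \<subseteq> {0..<p}"
    unfolding h_def using prime_gt_0_int[OF assms(1)] by auto
  ultimately have "h ` {0..<p} = {0..<p}"
    by (simp add: endo_inj_surj)
  then have "(\<Sum>x\<in>{0..<p}. f x) = (\<Sum>x\<in>{0..<p}. f (h x))"
    using sum.reindex[OF \<open>inj_on h {0..<p}\<close>, of f] by simp
  then show ?thesis
    unfolding h_def periodic by simp
qed

lemma nonresidue_exists:
  fixes p :: int
  assumes "prime p" "p > 2"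
  obtains g where "\<not> p dvd g" "\<not> QuadRes p g"
proof -
  define h where "h y = y\<^sup>2 mod p" for y
  have mod_range: "0 \<le> z mod p \<and> z mod p < p" for z
    using assms(2) by simp
  \<comment> \<open>\<open>y \<mapsto> y\<^sup>2\<close> identifies \<open>1\<close> and \<open>p - 1\<close>, so it cannot permute the nonzero residues.\<close>
  have "h 1 = h (p - 1)"
  proof -
    have "(p - 1)\<^sup>2 = 1 + p * (p - 2)"
      by (simp add: power2_eq_square algebra_simps)
    then show ?thesis
      unfolding h_def by simp
  qed
  then have not_inj: "\<not> inj_on h {1..<p}"
    using assms(2) by (auto dest: inj_onD[of h _ 1 "p - 1"])
  have "h ` {1..<p} \<noteq> {1..<p}"
    using eq_card_imp_inj_on[of "{1..<p}" h] not_inj by auto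
  moreover have "h ` {1..<p} \<supseteq> {1..<p}" if all_residues: "\<forall>x. \<not> p dvd x \<longrightarrow> QuadRes p x"
  proof
    fix x
    assume x: "x \<in> {1..<p}"
    then have "\<not> p dvd x"
      using zdvd_not_zless by auto
    then obtain y where y: "[y\<^sup>2 = x] (mod p)"
      using all_residues unfolding QuadRes_def by blast
    have "y mod p \<noteq> 0"
      using cong_dvd_iff[OF y] \<open>\<not> p dvd x\<close> by (auto simp: power2_eq_square)
    moreover note mod_range[of y]
    moreover have "h (y mod p) = x"
      using x y unfolding h_def cong_def by (simp add: power_mod)
    ultimately show "x \<in> h ` {1..<p}"
      by (auto intro!: image_eqI[of x h "y mod p"])
  qed
  moreover have "h ` {1..<p} \<subseteq> {1..<p}"
  proof
    fix x
    assume "x \<in> h ` {1..<p}"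
    then obtain y where "y \<in> {1..<p}" "x = y\<^sup>2 mod p"
      unfolding h_def by blast
    moreover have "\<not> p dvd y"
      using \<open>y \<in> {1..<p}\<close> zdvd_not_zless by auto
    then have "\<not> p dvd y\<^sup>2"
      using prime_dvd_power_int[OF assms(1)] by blast
    ultimately show "x \<in> {1..<p}"
      using mod_range[of "y\<^sup>2"] by (smt (verit) atLeastLessThan_iff dvd_eq_mod_eq_0)
  qed
  ultimately show ?thesis
    using that by blast
qed

lemma sum_Legendre_residues:
  fixes p :: int
  assumes "prime p" "p > 2"
  shows "(\<Sum>x\<in>{0..<p}. Legendre x p) = 0"
proof -
  obtain g where g: "\<not> p dvd g" "\<not> QuadRes p g"
    using nonresidue_exists[OF assms] .
  then have "Legendre g p = -1"
    unfolding Legendre_def by (simp add: cong_0_iff)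
  have "(\<Sum>x\<in>{0..<p}. Legendre x p) = (\<Sum>x\<in>{0..<p}. Legendre (g * x + 0) p)"
    using sum_mod_affine_reindex[OF assms(1) g(1), of "\<lambda>x. Legendre x p" 0] Legendre_mod by simp
  also have "\<dots> = - (\<Sum>x\<in>{0..<p}. Legendre x p)"
    using \<open>Legendre g p = -1\<close> by (simp add: Legendre_mult[OF assms] sum_negf)
  finally show ?thesis
    by simp
qed

lemma sum_Legendre_affine:
  fixes p :: int
  assumes "prime p" "p > 2" "\<not> p dvd c"
  shows "(\<Sum>x\<in>{0..<p}. Legendre (c * x + d) p) = 0"
  using sum_mod_affine_reindex[OF assms(1,3), of "\<lambda>x. Legendre x p"]
  by (simp add: Legendre_mod sum_Legendre_residues[OF assms(1,2)])

lemma sum_Legendre_power_odd: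
  fixes p :: int
  assumes "prime p" "p > 2"
  shows "(\<Sum>u\<in>{0..<p}. Legendre (a * u ^ (2 * m + 1)) p) = 0"
  unfolding Legendre_mult[OF assms] Legendre_power_odd[OF assms] sum_distrib_left[symmetric]
  by (simp add: sum_Legendre_residues[OF assms])

lemma sum_Legendre_row_rescale:
  fixes p :: int
  assumes "prime p" "p > 2" "\<not> p dvd v"
  shows "(\<Sum>u\<in>{0..<p}. Legendre (a * u ^ (2 * m + 1) + b * v ^ (2 * m)) p)
       = (\<Sum>u\<in>{0..<p}. Legendre (a * u ^ (2 * m + 1) * v + b) p)"
proof -
  define f where "f u = Legendre (a * u ^ (2 * m + 1) + b * v ^ (2 * m)) p" for u
  have "f (u mod p) = f u" for u
    unfolding f_def
    by (rule Legendre_cong) (intro cong_add cong_mult cong_pow cong_refl, simp add: cong_def)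
  then have "(\<Sum>u\<in>{0..<p}. f (v * u + 0)) = (\<Sum>u\<in>{0..<p}. f u)"
    by (rule sum_mod_affine_reindex[OF assms(1,3)])
  moreover have "f (v * u + 0) = Legendre (a * u ^ (2 * m + 1) * v + b) p" for u
  proof -
    have "a * (v * u + 0) ^ (2 * m + 1) + b * v ^ (2 * m) = (v ^ m)\<^sup>2 * (a * u ^ (2 * m + 1) * v + b)"
      unfolding power_even_eq[symmetric] power_mult_distrib power_add by (simp add: algebra_simps)
    moreover have "\<not> p dvd v ^ m"
      using assms(1,3) prime_dvd_power_int by blast
    ultimately show ?thesis
      unfolding f_def by (simp add: Legendre_square_mult[OF assms(1,2)])
  qed
  ultimately show ?thesis
    by (simp add: f_def)
qed

lemma sum_Legendre_weighted_powers_eq_0: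
  fixes p a b :: int and m :: nat
  assumes "prime p" "p > 2" "\<not> p dvd a" "m \<ge> 1"
  shows "(\<Sum>u\<in>{0..<p}. \<Sum>v\<in>{0..<p}. Legendre (a * u ^ (2 * m + 1) + b * v ^ (2 * m)) p) = 0"
proof -
  let ?L = "\<lambda>u v. Legendre (a * u ^ (2 * m + 1) + b * v ^ (2 * m)) p"
  let ?F = "\<lambda>u v. Legendre (a * u ^ (2 * m + 1) * v + b) p"
  have split0: "(\<Sum>x\<in>{0..<p}. f x) = f 0 + (\<Sum>x\<in>{1..<p}. f x)" for f :: "int \<Rightarrow> int"
  proof -
    have "{0..<p} = insert 0 {1..<p}"
      using assms(2) by auto
    then show ?thesis
      by simp
  qed
  have row0: "(\<Sum>u\<in>{0..<p}. ?L u 0) = 0"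
    using sum_Legendre_power_odd[OF assms(1,2)] assms(4) by (simp add: zero_power)
  have rows: "(\<Sum>u\<in>{0..<p}. ?L u v) = (\<Sum>u\<in>{0..<p}. ?F u v)" if "v \<in> {1..<p}" for v
  proof -
    have "\<not> p dvd v"
      using that zdvd_not_zless by auto
    then show ?thesis
      by (rule sum_Legendre_row_rescale[OF assms(1,2)])
  qed
  have columns: "(\<Sum>v\<in>{0..<p}. ?F u v) = (if u = 0 then p * Legendre b p else 0)"
    if "u \<in> {0..<p}" for u
  proof (cases "u = 0")
    case False
    then have "\<not> p dvd u"
      using that zdvd_not_zless by auto
    then have "\<not> p dvd a * u ^ (2 * m + 1)"
      using assms(1,3) prime_dvd_power_int by (auto simp: prime_dvd_mult_iff)
    then show ?thesis
      using sum_Legendre_affine[OF assms(1,2)] False by simp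
  qed (use assms(2) in simp)
  have "(\<Sum>u\<in>{0..<p}. \<Sum>v\<in>{0..<p}. ?L u v) = (\<Sum>v\<in>{0..<p}. \<Sum>u\<in>{0..<p}. ?L u v)"
    by (rule sum.swap)
  also have "\<dots> = (\<Sum>v\<in>{1..<p}. \<Sum>u\<in>{0..<p}. ?F u v)"
    unfolding split0[of "\<lambda>v. \<Sum>u\<in>{0..<p}. ?L u v"] row0 using rows by simp
  also have "\<dots> = (\<Sum>v\<in>{0..<p}. \<Sum>u\<in>{0..<p}. ?F u v) - p * Legendre b p"
    unfolding split0[of "\<lambda>v. \<Sum>u\<in>{0..<p}. ?F u v"] using assms(2) by simp
  also have "(\<Sum>v\<in>{0..<p}. \<Sum>u\<in>{0..<p}. ?F u v) = (\<Sum>u\<in>{0..<p}. \<Sum>v\<in>{0..<p}. ?F u v)"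
    by (rule sum.swap)
  also have "\<dots> = (\<Sum>u\<in>{0..<p}. if u = 0 then p * Legendre b p else 0)"
    using columns by (rule sum.cong[OF refl])
  also have "\<dots> = p * Legendre b p"
    using assms(2) by simp
  finally show ?thesis
    by simp
qed

lemma sum_periodic_atLeastAtMost:
  fixes p :: int and f :: "int \<Rightarrow> 'a::comm_monoid_add"
  assumes "p > 0" "\<And>x. f (x mod p) = f x"
  shows "(\<Sum>x=1..p. f x) = (\<Sum>x\<in>{0..<p}. f x)"
proof -
  have "{1..p} = insert p {1..<p}" "{0..<p} = insert 0 {1..<p}"
    using assms(1) by auto
  moreover have "f p = f 0"
    using assms(2)[of p] by simp
  ultimately show ?thesis
    by simp
qed

lemma cong_Delta:
  assumes "[u = u'] (mod p)" "[v = v'] (mod p)"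
  shows "[Delta n u v = Delta n u' v'] (mod p)"
  unfolding Delta_def using assms by (intro cong_add cong_mult cong_refl cong_pow)

lemma S_eq_0:
  fixes p :: int
  assumes "prime p" "p > int n" "odd n" "n \<ge> 3"
  shows "S n p = 0"
proof -
  obtain m where n: "n = 2 * m + 1"
    using assms(3) oddE by blast
  then have "m \<ge> 1"
    using assms(4) by simp
  have "p > 2" "p > 0"
    using assms(2,4) by auto
  have "\<not> p dvd int n - 1"
  proof
    assume "p dvd int n - 1"
    then have "p \<le> int n - 1"
      using assms(4) by (intro zdvd_imp_le) auto
    then show False
      using assms(2) by simp
  qed
  then have leading_coeff: "\<not> p dvd (int n - 1) ^ (n - 1)"
    using prime_dvd_power_int[OF assms(1)] by blast
  have Delta_eq: "Delta n u v = (int n - 1) ^ (n - 1) * u ^ (2 * m + 1) + int n ^ n * v ^ (2 * m)" for u v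
    unfolding Delta_def by (simp add: n)
  have periodic_u: "Legendre (Delta n (u mod p) v) p = Legendre (Delta n u v) p"
    and periodic_v: "Legendre (Delta n u (v mod p)) p = Legendre (Delta n u v) p" for u v
    by (intro Legendre_cong cong_Delta; simp add: cong_def)+
  have "S n p = (\<Sum>u=1..p. \<Sum>v\<in>{0..<p}. Legendre (Delta n u v) p)"
    unfolding S_def
    by (intro sum.cong refl sum_periodic_atLeastAtMost[OF \<open>p > 0\<close>]) (rule periodic_v)
  also have "\<dots> = (\<Sum>u\<in>{0..<p}. \<Sum>v\<in>{0..<p}. Legendre (Delta n u v) p)"
    by (intro sum_periodic_atLeastAtMost[OF \<open>p > 0\<close>]) (simp add: periodic_u)
  also have "\<dots> = 0"
    unfolding Delta_eq
    by (rule sum_Legendre_weighted_powers_eq_0[OF assms(1) \<open>p > 2\<close> leading_coeff \<open>m \<ge> 1\<close>])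
  finally show ?thesis .
qed

lemma abs_S_le:
  assumes "l > 0"
  shows "\<bar>S n l\<bar> \<le> l * l"
proof -
  have "\<bar>S n l\<bar> \<le> (\<Sum>u=1..l. \<bar>\<Sum>v=1..l. Legendre (Delta n u v) l\<bar>)"
    unfolding S_def by (rule sum_abs)
  also have "\<dots> \<le> (\<Sum>u=1..l. \<Sum>v=1..l. \<bar>Legendre (Delta n u v) l\<bar>)"
    by (intro sum_mono sum_abs)
  also have "\<dots> \<le> (\<Sum>u=1..l. \<Sum>v=1..l. 1)"
    by (intro sum_mono abs_Legendre_le_1)
  finally show ?thesis
    using assms by simp
qed

theorem lemma1:
  fixes n :: nat
  assumes "n \<ge> 5" and "n mod 4 = 1"
  shows "\<exists>c::real. c > 0 \<and>
           (\<forall>l::int. prime l \<and> odd l \<longrightarrow> \<bar>real_of_int (S n l)\<bar> \<le> c * real_of_int l)"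
proof (intro exI[of _ "real n"] conjI allI impI)
  show "real n > 0"
    using assms(1) by simp
  have "odd n"
    using assms(2) by presburger
  fix l :: int
  assume "prime l \<and> odd l"
  then have "prime l" "l > 0"
    using prime_gt_0_int by auto
  have "\<bar>S n l\<bar> \<le> int n * l"
  proof (cases "l > int n")
    case True
    then show ?thesis
      using S_eq_0[OF \<open>prime l\<close> True \<open>odd n\<close>] assms(1) \<open>l > 0\<close> by simp
  next
    case False
    then have "l * l \<le> int n * l"
      using \<open>l > 0\<close> by (intro mult_right_mono) auto
    then show ?thesis
      using abs_S_le[OF \<open>l > 0\<close>, of n] by linarith
  qed
  then show "\<bar>real_of_int (S n l)\<bar> \<le> real n * real_of_int l"
    by (metis of_int_abs of_int_le_iff of_int_mult of_int_of_nat_eq)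
qed

end
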